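(* Let $p$ be a prime. Let $G=P\times A$ and $H=P_1\times B$, where $P$ and $P_1$ are finite non-abelian $p$-groups and $A$, $B$ are non-trivial finite abelian groups of order coprime to $p$. Suppose that $\Gamma_G$ and $\Gamma_H$ are irregular and $\Gamma_G\cong\Gamma_H$. Then $|A|=|B|$ and $|P|=|P_1|$; in particular $|G|=|H|$.
   Context: For a non-abelian group $G$ with center $Z(G)$, the non-commuting graph $\Gamma_G$ is the simple graph with vertex set $G\setminus Z(G)$ in which two distinct vertices $x,y$ are adjacent if and only if $xy\neq yx$. A graph is regular if all its vertices have the same degree, and irregular otherwise. *)

theory Defs
  imports "HOL-Algebra.Algebra"
begin

definition grp_center :: "('a, 'b) monoid_scheme \<Rightarrow> 'a set" where
  "grp_center G = {z \<in> carrier G. \<forall>x \<in> carrier G. z \<otimes>\<^bsub>G\<^esub> x = x \<otimes>\<^bsub>G\<^esub> z}"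

definition nc_vertices :: "('a, 'b) monoid_scheme \<Rightarrow> 'a set" where
  "nc_vertices G = carrier G - grp_center G"

definition nc_adj :: "('a, 'b) monoid_scheme \<Rightarrow> 'a \<Rightarrow> 'a \<Rightarrow> bool" where
  "nc_adj G x y \<longleftrightarrow> x \<in> nc_vertices G \<and> y \<in> nc_vertices G \<and> x \<noteq> y
     \<and> x \<otimes>\<^bsub>G\<^esub> y \<noteq> y \<otimes>\<^bsub>G\<^esub> x"

definition nc_degree :: "('a, 'b) monoid_scheme \<Rightarrow> 'a \<Rightarrow> nat" where
  "nc_degree G x = card {y \<in> nc_vertices G. nc_adj G x y}"

definition nc_regular :: "('a, 'b) monoid_scheme \<Rightarrow> bool" where
  "nc_regular G \<longleftrightarrow> (\<forall>x \<in> nc_vertices G. \<forall>y \<in> nc_vertices G. nc_degree G x = nc_degree G y)"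

definition nc_irregular :: "('a, 'b) monoid_scheme \<Rightarrow> bool" where
  "nc_irregular G \<longleftrightarrow> \<not> nc_regular G"

definition nc_graph_iso :: "('a, 'b) monoid_scheme \<Rightarrow> ('c, 'd) monoid_scheme \<Rightarrow> bool" where
  "nc_graph_iso G H \<longleftrightarrow> (\<exists>f. bij_betw f (nc_vertices G) (nc_vertices H) \<and>
     (\<forall>x \<in> nc_vertices G. \<forall>y \<in> nc_vertices G. nc_adj G x y \<longleftrightarrow> nc_adj H (f x) (f y)))"

definition finite_p_group :: "nat \<Rightarrow> ('a, 'b) monoid_scheme \<Rightarrow> bool" where
  "finite_p_group p P \<longleftrightarrow> group P \<and> finite (carrier P) \<and> (\<exists>n. order P = p ^ n)"

end

theory Submission
  imports Defs
begin

text \<open>In \<open>P \<times> A\<close> with \<open>A\<close> abelian the centre is \<open>Z(P) \<times> A\<close>, so the non-commuting graph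
  has \<open>|A|(p\<^sup>n - p\<^sup>z)\<close> vertices and \<open>(x, a)\<close> has degree \<open>|A|(p\<^sup>n - p\<^sup>c)\<close>, where
  \<open>p\<^sup>z = |Z(P)| < p\<^sup>c = |C\<^sub>P(x)| < p\<^sup>n = |P|\<close>. Since \<open>|A|\<close> and \<open>p\<^sup>k - 1\<close> are prime to \<open>p\<close>, the
  \<open>p\<close>-parts of these two numbers give back \<open>z\<close> and \<open>c\<close>; their difference
  \<open>|A| p^z (p^(c - z) - 1)\<close> then gives back \<open>|A|\<close>, and finally \<open>n\<close>.\<close>

definition centralizer :: "('a, 'b) monoid_scheme \<Rightarrow> 'a \<Rightarrow> 'a set" where
  "centralizer G x = {y \<in> carrier G. x \<otimes>\<^bsub>G\<^esub> y = y \<otimes>\<^bsub>G\<^esub> x}"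

lemma (in group) subgroup_centralizer:
  assumes "x \<in> carrier G"
  shows "subgroup (centralizer G x) G"
proof (rule subgroupI)
  show "centralizer G x \<subseteq> carrier G" "centralizer G x \<noteq> {}"
    using assms by (auto simp: centralizer_def)
next
  fix y assume "y \<in> centralizer G x"
  then have y: "y \<in> carrier G" and xy: "x \<otimes> y = y \<otimes> x" by (auto simp: centralizer_def)
  have "inv y \<otimes> x = inv y \<otimes> (x \<otimes> y) \<otimes> inv y"
    using assms y by (simp add: m_assoc)
  also have "\<dots> = x \<otimes> inv y"
    using assms y by (simp add: xy m_assoc[symmetric])
  finally show "inv y \<in> centralizer G x"
    using y by (simp add: centralizer_def)
next
  fix y y' assume "y \<in> centralizer G x" "y' \<in> centralizer G x"
  then show "y \<otimes> y' \<in> centralizer G x"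
    using assms by (auto simp: centralizer_def) (metis m_assoc)
qed

lemma (in group) subgroup_grp_center: "subgroup (grp_center G) G"
proof -
  have "grp_center G = \<Inter>(centralizer G ` carrier G)"
    using one_closed by (auto simp: grp_center_def centralizer_def)
  then show ?thesis
    by (auto intro!: subgroups_Inter subgroup_centralizer)
qed

lemma grp_center_psubset_centralizer:
  assumes "x \<in> nc_vertices G"
  shows "grp_center G \<subset> centralizer G x"
  using assms by (auto simp: nc_vertices_def grp_center_def centralizer_def)

lemma centralizer_psubset_carrier:
  assumes "x \<in> nc_vertices G"
  shows "centralizer G x \<subset> carrier G"
  using assms by (auto simp: nc_vertices_def grp_center_def centralizer_def)

lemma (in group) nc_vertices_nonempty:
  assumes "\<not> comm_group G"
  shows "nc_vertices G \<noteq> {}"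
proof
  assume "nc_vertices G = {}"
  then have "comm_group G"
    by (intro group_comm_groupI) (auto simp: nc_vertices_def grp_center_def)
  with assms show False ..
qed

lemma nc_neighbours_eq:
  assumes "x \<in> nc_vertices G"
  shows "{y \<in> nc_vertices G. nc_adj G x y} = carrier G - centralizer G x"
  using assms by (auto simp: nc_adj_def nc_vertices_def grp_center_def centralizer_def) metis+

lemma grp_center_DirProd:
  assumes "comm_monoid A"
  shows "grp_center (G \<times>\<times> A) = grp_center G \<times> carrier A"
proof -
  interpret A: comm_monoid A by fact
  show ?thesis
  proof safe
    fix x a assume xa: "(x, a) \<in> grp_center (G \<times>\<times> A)"
    show "x \<in> grp_center G"
      unfolding grp_center_def
    proof safe
      show "x \<in> carrier G" using xa by (simp add: grp_center_def)
      fix y assume "y \<in> carrier G"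
      with xa A.one_closed show "x \<otimes>\<^bsub>G\<^esub> y = y \<otimes>\<^bsub>G\<^esub> x"
        by (simp add: grp_center_def) blast
    qed
    show "a \<in> carrier A" using xa by (simp add: grp_center_def)
  next
    fix x a assume "x \<in> grp_center G" "a \<in> carrier A"
    then show "(x, a) \<in> grp_center (G \<times>\<times> A)"
      by (auto simp: grp_center_def A.m_comm)
  qed
qed

lemma nc_vertices_DirProd:
  assumes "comm_monoid A"
  shows "nc_vertices (G \<times>\<times> A) = nc_vertices G \<times> carrier A"
  using grp_center_DirProd[OF assms] by (auto simp: nc_vertices_def)

lemma nc_neighbours_DirProd:
  assumes "comm_monoid A" and "x \<in> nc_vertices G" and "a \<in> carrier A"
  shows "{w \<in> nc_vertices (G \<times>\<times> A). nc_adj (G \<times>\<times> A) (x, a) w}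
       = {y \<in> nc_vertices G. nc_adj G x y} \<times> carrier A"
proof -
  interpret A: comm_monoid A by fact
  show ?thesis
    using assms(2,3) by (auto simp: nc_vertices_DirProd[OF assms(1)] nc_adj_def A.m_comm)
qed

lemma card_nc_vertices_DirProd:
  assumes "comm_monoid A"
  shows "card (nc_vertices (G \<times>\<times> A)) = card (nc_vertices G) * order A"
  by (simp add: nc_vertices_DirProd[OF assms] card_cartesian_product order_def)

lemma nc_degree_DirProd:
  assumes "comm_monoid A" and "x \<in> nc_vertices G" and "a \<in> carrier A"
  shows "nc_degree (G \<times>\<times> A) (x, a) = nc_degree G x * order A"
  by (simp add: nc_degree_def nc_neighbours_DirProd[OF assms] card_cartesian_product order_def)

lemma nc_graph_iso_invariants:
  assumes "nc_graph_iso G H" and v: "v \<in> nc_vertices G"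
  shows "\<exists>w \<in> nc_vertices H. card (nc_vertices H) = card (nc_vertices G)
           \<and> nc_degree H w = nc_degree G v"
proof -
  obtain f where f: "bij_betw f (nc_vertices G) (nc_vertices H)"
    and adj: "\<forall>x \<in> nc_vertices G. \<forall>y \<in> nc_vertices G. nc_adj G x y \<longleftrightarrow> nc_adj H (f x) (f y)"
    using assms(1) by (auto simp: nc_graph_iso_def)
  have im: "f ` nc_vertices G = nc_vertices H" using f by (simp add: bij_betw_def)
  have "{y \<in> nc_vertices H. nc_adj H (f v) y} = f ` {y \<in> nc_vertices G. nc_adj G v y}"
  proof safe
    fix u assume "u \<in> nc_vertices H" "nc_adj H (f v) u"
    moreover obtain y where "y \<in> nc_vertices G" "u = f y" using \<open>u \<in> nc_vertices H\<close> im by blast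
    ultimately show "u \<in> f ` {y \<in> nc_vertices G. nc_adj G v y}" using adj v by auto
  qed (use adj v im in auto)
  moreover have "inj_on f {y \<in> nc_vertices G. nc_adj G v y}"
    using f by (auto simp: bij_betw_def intro: inj_on_subset)
  ultimately have "nc_degree H (f v) = nc_degree G v"
    by (simp add: nc_degree_def card_image)
  moreover have "f v \<in> nc_vertices H" using f v by (auto simp: bij_betw_def)
  ultimately show ?thesis
    using bij_betw_same_card[OF f] by auto
qed

lemma not_dvd_if_coprime_prime:
  fixes p w :: nat
  assumes "Factorial_Ring.prime p" "coprime w p"
  shows "\<not> p dvd w"
  using assms coprime_absorb_right not_prime_unit by blast

lemma prime_power_times_coprime_unique:
  fixes p u u' :: nat
  assumes p: "Factorial_Ring.prime p" and "coprime u p" "coprime u' p" and eq: "p ^ i * u = p ^ j * u'"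
  shows "i = j \<and> u = u'"
proof -
  have mult: "multiplicity p (p ^ k * w) = k" if "coprime w p" for k w
  proof -
    have "w \<noteq> 0" using not_dvd_if_coprime_prime[OF p that] by (metis dvd_0_right)
    then show ?thesis
      using p that not_dvd_if_coprime_prime[OF p that]
      by (simp add: prime_elem_multiplicity_mult_distrib not_dvd_imp_multiplicity_0)
  qed
  have "i = j" using mult[OF assms(2), of i] mult[OF assms(3), of j] eq by simp
  with eq p show ?thesis by (simp add: prime_gt_0_nat)
qed

lemma coprime_prime_power_minus_one:
  fixes p :: nat
  assumes "Factorial_Ring.prime p" "k > 0"
  shows "coprime (p ^ k - 1) p"
proof -
  have "p ^ k = Suc (p ^ k - 1)" using assms(1) by (simp add: prime_gt_0_nat)
  then have "coprime (p ^ k - 1) (p ^ k)" by (metis coprime_Suc_right_nat)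
  then show ?thesis
    using assms(2) by simp
qed

lemma power_diff_power_eq:
  fixes p :: nat
  assumes "z \<le> n"
  shows "p ^ n - p ^ z = p ^ z * (p ^ (n - z) - 1)"
  using assms by (simp add: diff_mult_distrib2 power_add[symmetric])

lemma prime_power_gap_unique:
  fixes p m m' :: nat
  assumes p: "Factorial_Ring.prime p" and m: "coprime m p" "coprime m' p" and "z < n" "z' < n'"
    and eq: "(p ^ n - p ^ z) * m = (p ^ n' - p ^ z') * m'"
  shows "z = z' \<and> (p ^ (n - z) - 1) * m = (p ^ (n' - z') - 1) * m'"
proof (rule prime_power_times_coprime_unique[OF p])
  show "coprime ((p ^ (n - z) - 1) * m) p" "coprime ((p ^ (n' - z') - 1) * m') p"
    using m assms(4,5) coprime_prime_power_minus_one[OF p] by simp_all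
  show "p ^ z * ((p ^ (n - z) - 1) * m) = p ^ z' * ((p ^ (n' - z') - 1) * m')"
    using eq assms(4,5) by (simp add: power_diff_power_eq mult.assoc)
qed

lemma prime_power_gaps_determine:
  fixes p m m' :: nat
  assumes p: "Factorial_Ring.prime p" and m: "coprime m p" "coprime m' p"
    and "z < c" "c < n" "z' < c'" "c' < n'"
    and e1: "(p ^ n - p ^ z) * m = (p ^ n' - p ^ z') * m'"
    and e2: "(p ^ n - p ^ c) * m = (p ^ n' - p ^ c') * m'"
  shows "m = m' \<and> n = n'"
proof -
  have p1: "p > 1" using p prime_gt_1_nat by blast
  have split: "(p ^ n - p ^ z) * k = (p ^ n - p ^ c) * k + (p ^ c - p ^ z) * k"
    if "z < c" "c < n" for n z c k
    using that p1 power_increasing[of z c p] power_increasing[of c n p]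
    by (simp add: diff_mult_distrib)
  have e3: "(p ^ c - p ^ z) * m = (p ^ c' - p ^ z') * m'"
    using e1 e2 split[OF assms(4,5), of m] split[OF assms(6,7), of m'] by linarith
  from prime_power_gap_unique[OF p m _ _ e1] assms(4-7)
  have z: "z = z'" and a: "(p ^ (n - z) - 1) * m = (p ^ (n' - z) - 1) * m'" by auto
  from prime_power_gap_unique[OF p m _ _ e2] assms(4-7) have c: "c = c'" by auto
  from prime_power_gap_unique[OF p m _ _ e3] assms(4-7) z c
  have "(p ^ (c - z) - 1) * m = (p ^ (c - z) - 1) * m'" by auto
  moreover have "p ^ (c - z) > 1" using p1 assms(4) one_less_power[of p "c - z"] by simp
  ultimately have mm: "m = m'" by simp
  have "m > 0" using m(1) p1 by (cases m) auto
  with a mm have "p ^ (n - z) - 1 = p ^ (n' - z) - 1" by simp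
  moreover have "p ^ (n - z) \<ge> 1" "p ^ (n' - z) \<ge> 1" using p1 by simp_all
  ultimately have "p ^ (n - z) = p ^ (n' - z)" by linarith
  then have "n - z = n' - z" using p1 by simp
  with mm z assms(4-7) show ?thesis by simp
qed

lemma card_subgroup_of_p_group:
  assumes p: "Factorial_Ring.prime p" and P: "finite_p_group p P" and H: "subgroup H P"
  shows "\<exists>i. card H = p ^ i"
proof -
  from P obtain n where "group P" and n: "order P = p ^ n"
    by (auto simp: finite_p_group_def)
  then have "card H dvd p ^ n"
    using group.lagrange[OF _ H] by (metis dvd_triv_right)
  then show ?thesis using divides_primepow_nat[OF p] by auto
qed

lemma p_group_nc_parameters:
  assumes p: "Factorial_Ring.prime p" and P: "finite_p_group p P" and x: "x \<in> nc_vertices P"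
  shows "\<exists>n z c. z < c \<and> c < n \<and> order P = p ^ n
           \<and> card (nc_vertices P) = p ^ n - p ^ z \<and> nc_degree P x = p ^ n - p ^ c"
proof -
  interpret group P using P by (simp add: finite_p_group_def)
  have p1: "p > 1" using p prime_gt_1_nat by blast
  from P obtain n where fin: "finite (carrier P)" and n: "card (carrier P) = p ^ n"
    by (auto simp: finite_p_group_def order_def)
  have xP: "x \<in> carrier P" using x by (simp add: nc_vertices_def)
  obtain z where z: "card (grp_center P) = p ^ z"
    using card_subgroup_of_p_group[OF p P subgroup_grp_center] by blast
  obtain c where c: "card (centralizer P x) = p ^ c"
    using card_subgroup_of_p_group[OF p P subgroup_centralizer[OF xP]] by blast
  have ZC: "grp_center P \<subset> centralizer P x" and CP: "centralizer P x \<subset> carrier P"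
    using grp_center_psubset_centralizer[OF x] centralizer_psubset_carrier[OF x] .
  have finC: "finite (centralizer P x)" using CP fin finite_subset by blast
  have "p ^ z < p ^ c" using psubset_card_mono[OF finC ZC] z c by simp
  then have zc: "z < c" using p1 power_less_imp_less_exp by blast
  have "p ^ c < p ^ n" using psubset_card_mono[OF fin CP] c n by simp
  then have cn: "c < n" using p1 power_less_imp_less_exp by blast
  have finZ: "finite (grp_center P)" using ZC finC finite_subset by blast
  have "grp_center P \<subseteq> carrier P" using ZC CP by blast
  then have "card (nc_vertices P) = p ^ n - p ^ z"
    using card_Diff_subset[OF finZ] z n by (simp add: nc_vertices_def)
  moreover have "nc_degree P x = p ^ n - p ^ c"
    using CP finC c n by (simp add: nc_degree_def nc_neighbours_eq[OF x] card_Diff_subset)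
  ultimately show ?thesis
    using zc cn n by (auto simp: order_def)
qed

theorem mainTheorem5:
  fixes p :: nat
    and P :: "'a monoid" and A :: "'b monoid"
    and P1 :: "'c monoid" and B :: "'d monoid"
  assumes "Factorial_Ring.prime p"
    and "finite_p_group p P" and "\<not> comm_group P"
    and "finite_p_group p P1" and "\<not> comm_group P1"
    and "comm_group A" and "finite (carrier A)" and "order A > 1" and "coprime (order A) p"
    and "comm_group B" and "finite (carrier B)" and "order B > 1" and "coprime (order B) p"
    and "nc_irregular (P \<times>\<times> A)" and "nc_irregular (P1 \<times>\<times> B)"
    and "nc_graph_iso (P \<times>\<times> A) (P1 \<times>\<times> B)"
  shows "order A = order B \<and> order P = order P1 \<and> order (P \<times>\<times> A) = order (P1 \<times>\<times> B)"
proof -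
  have A: "comm_monoid A" and B: "comm_monoid B"
    using assms(6,10) by (simp_all add: comm_group_def)
  obtain x where x: "x \<in> nc_vertices P"
    using group.nc_vertices_nonempty[of P] assms(2,3) by (auto simp: finite_p_group_def)
  have one: "\<one>\<^bsub>A\<^esub> \<in> carrier A"
    using A by (simp add: comm_monoid_def monoid.one_closed)
  obtain n z c where "z < c" "c < n" and n: "order P = p ^ n"
    and V: "card (nc_vertices P) = p ^ n - p ^ z" and D: "nc_degree P x = p ^ n - p ^ c"
    using p_group_nc_parameters[OF assms(1,2) x] by blast
  have "(x, \<one>\<^bsub>A\<^esub>) \<in> nc_vertices (P \<times>\<times> A)"
    using x one by (simp add: nc_vertices_DirProd[OF A])
  from nc_graph_iso_invariants[OF assms(16) this] obtain y b
    where y: "y \<in> nc_vertices P1" and b: "b \<in> carrier B"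
      and V_eq: "card (nc_vertices (P1 \<times>\<times> B)) = card (nc_vertices (P \<times>\<times> A))"
      and D_eq: "nc_degree (P1 \<times>\<times> B) (y, b) = nc_degree (P \<times>\<times> A) (x, \<one>\<^bsub>A\<^esub>)"
    by (auto simp: nc_vertices_DirProd[OF B])
  obtain n' z' c' where "z' < c'" "c' < n'" and n': "order P1 = p ^ n'"
    and V': "card (nc_vertices P1) = p ^ n' - p ^ z'" and D': "nc_degree P1 y = p ^ n' - p ^ c'"
    using p_group_nc_parameters[OF assms(1,4) y] by blast
  have "(p ^ n - p ^ z) * order A = (p ^ n' - p ^ z') * order B"
    using V_eq V V' by (simp add: card_nc_vertices_DirProd[OF A] card_nc_vertices_DirProd[OF B])
  moreover have "(p ^ n - p ^ c) * order A = (p ^ n' - p ^ c') * order B"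
    using D_eq D D' by (simp add: nc_degree_DirProd[OF A x one] nc_degree_DirProd[OF B y b])
  ultimately have "order A = order B \<and> n = n'"
    using prime_power_gaps_determine[OF assms(1,9,13)] \<open>z < c\<close> \<open>c < n\<close> \<open>z' < c'\<close> \<open>c' < n'\<close>
    by blast
  then show ?thesis
    using n n' by (simp add: order_def card_cartesian_product)
qed

end
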